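(* Let $q=n-k$, write $\mathbb R^n=\mathbb R^k\times\mathbb R^q$, let $E\subset\mathbb R^q$ be open and $B\colon E\to\mathrm{Hom}(\mathbb R^k,\mathbb R^q)$ continuous, and for $y\in E$ let $P_y=\{(t,\,y+B(y)t):t\in\mathbb R^k\}$. Suppose the planes $P_y$, $y\in E$, form a fibration of an open subset $T\subset\mathbb R^n$. Define $A\colon E\to\mathrm{Hom}(\mathbb R^{k+1},\mathbb R^q)$ by $A(y)(t,\lambda)=B(y)t+\lambda y$. Then the fibration is skew if and only if $\mathrm{Ker}(A(x)-A(y))=0$ for every pair of distinct $x,y\in E$.
   Context: A fibration of an open set $T$ by oriented affine $k$-planes is a family of pairwise disjoint oriented affine $k$-planes with union $T$ such that the map sending a point to its fiber is continuous. It is skew if any two distinct fibers are disjoint and contain no parallel lines. *)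

theory Defs
  imports "HOL-Analysis.Analysis"
begin

text \<open>R^n = R^k x R^q is modelled as the product type (real^'k) \<times> (real^'q).
  Hom(R^k,R^q) is modelled by q x k matrices real^'k^'q acting via *v.\<close>

definition plane :: "(real^'q::finite \<Rightarrow> real^'k::finite^'q) \<Rightarrow> real^'q \<Rightarrow> ((real^'k) \<times> (real^'q)) set" where
  "plane B y = {(t, y + B y *v t) | t. True}"

definition is_fibration :: "(real^'q) set \<Rightarrow> (real^'q \<Rightarrow> real^'k^'q) \<Rightarrow> ((real^'k::finite) \<times> (real^'q::finite)) set \<Rightarrow> bool" where
  "is_fibration E B T \<longleftrightarrow>
     open T \<and>
     (\<forall>x\<in>E. \<forall>y\<in>E. x \<noteq> y \<longrightarrow> plane B x \<inter> plane B y = {}) \<and>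
     (\<Union>y\<in>E. plane B y) = T \<and>
     continuous_on T (\<lambda>p. THE y. y \<in> E \<and> p \<in> plane B y)"

definition contains_line_dir :: "'a::real_vector set \<Rightarrow> 'a \<Rightarrow> bool" where
  "contains_line_dir S v \<longleftrightarrow> v \<noteq> 0 \<and> (\<exists>a. \<forall>s::real. a + s *\<^sub>R v \<in> S)"

definition is_skew :: "(real^'q) set \<Rightarrow> (real^'q \<Rightarrow> real^'k^'q) \<Rightarrow> bool" where
  "is_skew E B \<longleftrightarrow>
     (\<forall>x\<in>E. \<forall>y\<in>E. x \<noteq> y \<longrightarrow>
        plane B x \<inter> plane B y = {} \<and>
        \<not> (\<exists>v::(real^'k::finite) \<times> (real^'q::finite). contains_line_dir (plane B x) v \<and> contains_line_dir (plane B y) v))"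

definition Amap :: "(real^'q \<Rightarrow> real^'k^'q) \<Rightarrow> real^'q \<Rightarrow> (real^'k::finite) \<times> real \<Rightarrow> real^'q::finite" where
  "Amap B y = (\<lambda>(t, l). B y *v t + l *\<^sub>R y)"

end

theory Submission
  imports Defs
begin

text \<open>Skewness is a condition on each pair of distinct fibres, and so is the kernel condition;
  both reduce to the same two facts about \<open>D = B x - B y\<close>: \<open>x + B x t = y + B y t\<close> has no
  solution \<open>t\<close> (disjointness), and \<open>D\<close> is injective (no common line direction \<open>(u, B x u)\<close>).
  The kernel of \<open>(t, \<lambda>) \<mapsto> D t + \<lambda> (x - y)\<close> is trivial exactly when both hold: vectors
  with \<open>\<lambda> = 0\<close> test injectivity, and scaling \<open>\<lambda>\<close> to \<open>1\<close> gives a common point.\<close>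

lemma trivial_kernel_augmented_iff:
  fixes f :: "'a::real_vector \<Rightarrow> 'b::real_vector"
  assumes "linear f"
  shows "(\<forall>t l. f t + l *\<^sub>R c = 0 \<longrightarrow> t = 0 \<and> l = 0) \<longleftrightarrow>
         (\<forall>t. f t + c \<noteq> 0) \<and> (\<forall>u. f u = 0 \<longrightarrow> u = 0)"
proof safe
  fix t assume "\<forall>t l. f t + l *\<^sub>R c = 0 \<longrightarrow> t = 0 \<and> l = 0" and "f t + c = 0"
  then show False by (metis one_neq_zero scaleR_one)
next
  fix u assume "\<forall>t l. f t + l *\<^sub>R c = 0 \<longrightarrow> t = 0 \<and> l = 0" and "f u = 0"
  then show "u = 0" by (metis add_0 scale_zero_left)
next
  fix t l
  assume no_sol: "\<forall>t. f t + c \<noteq> 0" and inj: "\<forall>u. f u = 0 \<longrightarrow> u = 0" and ker: "f t + l *\<^sub>R c = 0"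
  have "l = 0"
  proof (rule ccontr)
    assume "l \<noteq> 0"
    then have "f (inverse l *\<^sub>R t) + c = inverse l *\<^sub>R (f t + l *\<^sub>R c)"
      by (simp add: linear_cmul[OF assms] scaleR_add_right)
    with ker no_sol show False by simp
  qed
  with ker inj show "t = 0" "l = 0" by simp_all
qed

lemma plane_inter_empty_iff:
  "plane B x \<inter> plane B y = {} \<longleftrightarrow> (\<forall>t. (B x *v t - B y *v t) + (x - y) \<noteq> 0)"
  unfolding plane_def by (auto simp: algebra_simps)

lemma contains_line_dir_plane_iff:
  "contains_line_dir (plane B x) (u, w) \<longleftrightarrow> u \<noteq> 0 \<and> w = B x *v u"
proof
  assume "contains_line_dir (plane B x) (u, w)"
  then obtain a b where nz: "(u, w) \<noteq> 0" and line: "\<And>s::real. (a, b) + s *\<^sub>R (u, w) \<in> plane B x"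
    unfolding contains_line_dir_def by auto
  from line[of 0] line[of 1] have "w = B x *v u"
    by (auto simp: plane_def matrix_vector_right_distrib)
  with nz show "u \<noteq> 0 \<and> w = B x *v u" by (auto simp: zero_prod_def)
next
  assume u: "u \<noteq> 0 \<and> w = B x *v u"
  then have "(0, x) + s *\<^sub>R (u, w) \<in> plane B x" for s :: real
    by (auto simp: plane_def matrix_vector_mult_scaleR)
  with u show "contains_line_dir (plane B x) (u, w)"
    unfolding contains_line_dir_def by (metis prod.inject zero_prod_def)
qed

lemma planes_no_parallel_line_iff:
  "\<not> (\<exists>v. contains_line_dir (plane B x) v \<and> contains_line_dir (plane B y) v) \<longleftrightarrow>
   (\<forall>u. B x *v u - B y *v u = 0 \<longrightarrow> u = 0)"
  by (auto simp: contains_line_dir_plane_iff)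

lemma Amap_diff:
  "Amap B x (t, l) - Amap B y (t, l) = (B x *v t - B y *v t) + l *\<^sub>R (x - y)"
  unfolding Amap_def by (simp add: algebra_simps)

lemma Amap_diff_kernel_trivial_iff:
  "{w. Amap B x w - Amap B y w = 0} = {0} \<longleftrightarrow>
   (\<forall>t l. (B x *v t - B y *v t) + l *\<^sub>R (x - y) = 0 \<longrightarrow> t = 0 \<and> l = 0)"
proof -
  have "Amap B x 0 - Amap B y 0 = 0"
    by (simp add: Amap_def zero_prod_def)
  then have "{w. Amap B x w - Amap B y w = 0} = {0} \<longleftrightarrow> (\<forall>w. Amap B x w - Amap B y w = 0 \<longrightarrow> w = 0)"
    by blast
  then show ?thesis
    by (simp only: split_paired_All Amap_diff zero_prod_def prod.inject)
qed

lemma skew_pair_iff_Amap_diff_kernel_trivial: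
  "(plane B x \<inter> plane B y = {} \<and>
    \<not> (\<exists>v. contains_line_dir (plane B x) v \<and> contains_line_dir (plane B y) v)) \<longleftrightarrow>
   {w. Amap B x w - Amap B y w = 0} = {0}"
proof -
  have "linear (\<lambda>t. B x *v t - B y *v t)"
    by (intro linear_compose_sub matrix_vector_mul_linear)
  then show ?thesis
    unfolding Amap_diff_kernel_trivial_iff plane_inter_empty_iff planes_no_parallel_line_iff
    by (simp only: trivial_kernel_augmented_iff)
qed

theorem lemma3p3:
  fixes E :: "(real^'q::finite) set"
    and B :: "real^'q \<Rightarrow> real^'k::finite^'q"
    and T :: "((real^'k) \<times> (real^'q)) set"
  assumes "open E"
    and "continuous_on E B"
    and "is_fibration E B T"
  shows "is_skew E B \<longleftrightarrow>
         (\<forall>x\<in>E. \<forall>y\<in>E. x \<noteq> y \<longrightarrow> {w. Amap B x w - Amap B y w = 0} = {0})"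
  unfolding is_skew_def skew_pair_iff_Amap_diff_kernel_trivial ..

end
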